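(* Let $n\ge2$, $\alpha_1>0$, $\alpha_2>\alpha_3>0$, $\omega=e^{2\pi j/n}$ ($j=\sqrt{-1}$). Then $(F_n^*\otimes I_2)^{-1}\hat A\,(F_n^*\otimes I_2)=\operatorname{diag}(D_1,\dots,D_n)$ with $$D_i=A_1+A_2\,\omega^{(n-1)(i-1)}=\begin{bmatrix}0&-1+\omega^{(n-1)(i-1)}\\ \alpha_1&-\alpha_2+\alpha_3\omega^{(n-1)(i-1)}\end{bmatrix},\quad i=1,\dots,n.$$ Consequently the eigenvalues of $\hat A$ are exactly the roots $\lambda$ of the equations $$\lambda^2+\big(\alpha_2-\alpha_3\omega^{(n-1)(i-1)}\big)\lambda+\alpha_1\big(1-\omega^{(n-1)(i-1)}\big)=0,\qquad i=1,\dots,n.$$ Moreover, if $\alpha_1-\alpha_2\alpha_3+\alpha_3^2\neq0$, then for $i\neq k$ the matrices $D_i$ and $D_k$ have no common eigenvalue.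
   Context: $A_1=\begin{bmatrix}0&-1\\ \alpha_1&-\alpha_2\end{bmatrix}$, $A_2=\begin{bmatrix}0&1\\0&\alpha_3\end{bmatrix}$. $\hat A\in\mathbb R^{2n\times2n}$ is the block circulant $n\times n$ block matrix (blocks $2\times2$) with block $(1,1)=A_1$, block $(1,n)=A_2$, and for $i=2,\dots,n$ block $(i,i)=A_1$, block $(i,i-1)=A_2$; other blocks zero. $F_n$ is the unitary Fourier matrix defined by $F_n^*=\frac1{\sqrt n}\big[\omega^{(r-1)(c-1)}\big]_{r,c=1}^n$ with $\omega=e^{2\pi j/n}$, where $F_n^*$ is the conjugate transpose of $F_n$; $\otimes$ is the Kronecker product. *)

theory Defs
  imports "Jordan_Normal_Form.Char_Poly"
begin

(* Indices are 0-based throughout: block index i (0 \<le> i < n) corresponds to the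
   paper's block index i+1. Matrices are complex (real data embedded via of_real). *)

definition A1 :: "real \<Rightarrow> real \<Rightarrow> complex mat" where
  "A1 a1 a2 = mat_of_rows_list 2 [[0, -1], [of_real a1, - of_real a2]]"

definition A2 :: "real \<Rightarrow> complex mat" where
  "A2 a3 = mat_of_rows_list 2 [[0, 1], [0, of_real a3]]"

definition Ahat_block :: "nat \<Rightarrow> real \<Rightarrow> real \<Rightarrow> real \<Rightarrow> nat \<Rightarrow> nat \<Rightarrow> complex mat" where
  "Ahat_block n a1 a2 a3 r c =
     (if r = c then A1 a1 a2
      else if (r = 0 \<and> c = n - 1) \<or> (r \<ge> 1 \<and> c = r - 1) then A2 a3
      else 0\<^sub>m 2 2)"

definition Ahat :: "nat \<Rightarrow> real \<Rightarrow> real \<Rightarrow> real \<Rightarrow> complex mat" where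
  "Ahat n a1 a2 a3 = mat (2*n) (2*n)
     (\<lambda>(p,q). Ahat_block n a1 a2 a3 (p div 2) (q div 2) $$ (p mod 2, q mod 2))"

definition omega :: "nat \<Rightarrow> complex" where
  "omega n = exp (2 * complex_of_real pi * \<i> / of_nat n)"

(* F_n^* = 1/sqrt n [omega^((r-1)(c-1))], written 0-based *)
definition Fstar :: "nat \<Rightarrow> complex mat" where
  "Fstar n = mat n n (\<lambda>(r,c). omega n ^ (r*c) / complex_of_real (sqrt (real n)))"

definition kron :: "'a :: times mat \<Rightarrow> 'a mat \<Rightarrow> 'a mat" where
  "kron A B = mat (dim_row A * dim_row B) (dim_col A * dim_col B)
     (\<lambda>(i,j). A $$ (i div dim_row B, j div dim_col B) * B $$ (i mod dim_row B, j mod dim_col B))"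

definition block_diag2 :: "nat \<Rightarrow> (nat \<Rightarrow> 'a :: zero mat) \<Rightarrow> 'a mat" where
  "block_diag2 n D = mat (2*n) (2*n)
     (\<lambda>(p,q). if p div 2 = q div 2 then D (p div 2) $$ (p mod 2, q mod 2) else 0)"

definition Dblk :: "nat \<Rightarrow> real \<Rightarrow> real \<Rightarrow> real \<Rightarrow> nat \<Rightarrow> complex mat" where
  "Dblk n a1 a2 a3 i = A1 a1 a2 + (omega n ^ ((n-1)*i)) \<cdot>\<^sub>m A2 a3"

end

theory Submission
  imports Defs
begin

text \<open>
  \<open>Ahat\<close> is block circulant, so the block Fourier matrix \<open>T = F\<^sub>n\<^sup>* \<otimes> I\<^sub>2\<close>
  diagonalizes it: shifting the rows of \<open>F\<^sub>n\<^sup>*\<close> cyclically by one multiplies column \<open>k\<close>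
  by \<open>\<omega>^((n - 1) k)\<close>, which gives \<open>Ahat T = T diag(D\<^sub>1, \<dots>, D\<^sub>n)\<close>, and by orthogonality
  of the characters \<open>k \<mapsto> \<omega>^(r k)\<close> the inverse of \<open>T\<close> is \<open>F\<^sub>n \<otimes> I\<^sub>2\<close>.
  Similar matrices have the same eigenvalues, a block diagonal matrix has exactly the
  eigenvalues of its blocks, and those of a \<open>2 \<times> 2\<close> block are the roots of
  \<open>\<lambda>\<^sup>2 - tr \<lambda> + det\<close>. If \<open>D\<^sub>i\<close> and \<open>D\<^sub>k\<close> shared an eigenvalue \<open>\<lambda>\<close>, subtracting their
  quadratics would give \<open>(w\<^sub>k - w\<^sub>i)(\<alpha>\<^sub>3 \<lambda> + \<alpha>\<^sub>1) = 0\<close> with \<open>w\<^sub>i = \<omega>^((n - 1) i)\<close>; these are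
  distinct, so \<open>\<alpha>\<^sub>3 \<lambda> = -\<alpha>\<^sub>1\<close>, and substituting back yields
  \<open>\<alpha>\<^sub>1 (\<alpha>\<^sub>1 - \<alpha>\<^sub>2 \<alpha>\<^sub>3 + \<alpha>\<^sub>3\<^sup>2) = 0\<close>.
\<close>

section \<open>Powers of \<open>\<omega>\<close>\<close>

lemma omega_power_self: "n > 0 \<Longrightarrow> omega n ^ n = 1"
proof -
  assume "n > 0"
  have "omega n ^ n = exp (of_nat n * (2 * complex_of_real pi * \<i> / of_nat n))"
    unfolding omega_def by (rule exp_of_nat_mult[symmetric])
  also have "\<dots> = exp (2 * complex_of_real pi * \<i>)"
    using \<open>n > 0\<close> by simp
  finally show ?thesis by simp
qed

lemma omega_power_mod: "n > 0 \<Longrightarrow> omega n ^ m = omega n ^ (m mod n)"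
  by (metis div_mult_mod_eq mult.commute omega_power_self power_add power_mult power_one mult_1)

lemma omega_power_eq_cis: "n > 0 \<Longrightarrow> omega n ^ m = cis (2 * pi * m / n)"
proof -
  assume "n > 0"
  have "omega n = cis (2 * pi / n)"
    unfolding omega_def by (simp add: cis_conv_exp mult_ac)
  then show ?thesis by (simp add: DeMoivre mult_ac)
qed

lemma omega_power_neq_1:
  assumes "0 < m" "m < n" shows "omega n ^ m \<noteq> 1"
proof
  assume "omega n ^ m = 1"
  then have "cos (2 * pi * m / n) = 1"
    using omega_power_eq_cis[of n m] assms by (metis Re_complex_of_real cis.sel(1) gr_zeroI less_zeroE one_complex.sel(1))
  then obtain k :: int where "2 * pi * m / n = 2 * pi * k"
    by (auto simp: cos_one_2pi_int mult_ac)
  then have "real m = real n * k"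
    using assms by (simp add: field_simps)
  then have "int m = int n * k" by (metis of_int_eq_iff of_int_mult of_int_of_nat_eq)
  then have "0 < int n * k" "int n * k < int n" using assms by linarith+
  then show False by (smt (verit) mult_le_cancel_left1 zero_less_mult_iff)
qed

lemma omega_power_inj:
  assumes "i < n" "k < n" "omega n ^ i = omega n ^ k" shows "i = k"
proof (rule ccontr)
  assume "i \<noteq> k"
  have "omega n \<noteq> 0" unfolding omega_def by simp
  have "omega n ^ (max i k - min i k) = 1"
    using assms \<open>omega n \<noteq> 0\<close>
    by (cases "i \<le> k") (simp_all add: power_diff max_def min_def)
  moreover have "0 < max i k - min i k" "max i k - min i k < n"
    using assms \<open>i \<noteq> k\<close> by auto
  ultimately show False using omega_power_neq_1 by blast
qed

lemma omega_power_pred_mult: "n > 0 \<Longrightarrow> omega n ^ ((n - 1) * i) = inverse (omega n ^ i)"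
proof -
  assume "n > 0"
  then have "omega n ^ ((n - 1) * i) * omega n ^ i = (omega n ^ n) ^ i"
    by (metis Suc_diff_1 mult.commute mult_Suc power_add power_mult)
  then show ?thesis using \<open>n > 0\<close>
    by (simp add: omega_power_self) (metis inverse_unique mult.commute)
qed

lemma sum_omega_powers:
  assumes "n > 0"
  shows "(\<Sum>k<n. (omega n ^ m) ^ k) = (if m mod n = 0 then of_nat n else 0)"
proof (cases "m mod n = 0")
  case True
  then show ?thesis using omega_power_mod[OF assms, of m] by simp
next
  case False
  then have "omega n ^ m \<noteq> 1"
    using omega_power_mod[OF assms, of m] omega_power_neq_1[of "m mod n" n] assms by auto
  moreover have "(omega n ^ m) ^ n = 1"
    by (metis omega_power_self[OF assms] power_mult power_mult_distrib mult.commute power_one)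
  ultimately show ?thesis using False by (simp add: geometric_sum)
qed

section \<open>Kronecker products with \<open>1\<^sub>m 2\<close>\<close>

lemma sum_atLeast0_double:
  fixes f :: "nat \<Rightarrow> 'a::comm_monoid_add"
  shows "(\<Sum>s = 0..<2 * n. f s) = (\<Sum>c<n. f (2 * c) + f (2 * c + 1))"
  using sum.nat_group[of f 2 n]
  by (simp add: atLeast0LessThan mult.commute numeral_2_eq_2)

lemma kron_one2_carrier: "F \<in> carrier_mat n n \<Longrightarrow> kron F (1\<^sub>m 2) \<in> carrier_mat (2 * n) (2 * n)"
  unfolding kron_def by auto

lemma kron_one2_index:
  fixes F :: "'a::semiring_1 mat"
  assumes "F \<in> carrier_mat n n" "p < 2 * n" "q < 2 * n"
  shows "kron F (1\<^sub>m 2) $$ (p, q) = (if p mod 2 = q mod 2 then F $$ (p div 2, q div 2) else 0)"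
  using assms unfolding kron_def by auto

lemma mult_kron_one2_index:
  fixes M F :: "'a::semiring_1 mat"
  assumes M: "M \<in> carrier_mat (2 * n) (2 * n)" and F: "F \<in> carrier_mat n n"
    and pq: "p < 2 * n" "q < 2 * n"
  shows "(M * kron F (1\<^sub>m 2)) $$ (p, q) = (\<Sum>c<n. M $$ (p, 2 * c + q mod 2) * F $$ (c, q div 2))"
proof -
  have "(M * kron F (1\<^sub>m 2)) $$ (p, q) = (\<Sum>s = 0..<2 * n. M $$ (p, s) * kron F (1\<^sub>m 2) $$ (s, q))"
    using M F pq kron_one2_carrier[OF F] by (simp add: scalar_prod_def)
  also have "\<dots> = (\<Sum>c<n. M $$ (p, 2 * c + q mod 2) * F $$ (c, q div 2))"
    unfolding sum_atLeast0_double
  proof (rule sum.cong[OF refl])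
    fix c assume "c \<in> {..<n}"
    then have "2 * c < 2 * n" "2 * c + 1 < 2 * n" by auto
    then show "M $$ (p, 2 * c) * kron F (1\<^sub>m 2) $$ (2 * c, q) + M $$ (p, 2 * c + 1) * kron F (1\<^sub>m 2) $$ (2 * c + 1, q)
      = M $$ (p, 2 * c + q mod 2) * F $$ (c, q div 2)"
      using kron_one2_index[OF F _ pq(2), of "2 * c"] kron_one2_index[OF F _ pq(2), of "2 * c + 1"]
      by (cases "even q") auto
  qed
  finally show ?thesis .
qed

lemma kron_one2_mult_index:
  fixes M F :: "'a::semiring_1 mat"
  assumes M: "M \<in> carrier_mat (2 * n) (2 * n)" and F: "F \<in> carrier_mat n n"
    and pq: "p < 2 * n" "q < 2 * n"
  shows "(kron F (1\<^sub>m 2) * M) $$ (p, q) = (\<Sum>c<n. F $$ (p div 2, c) * M $$ (2 * c + p mod 2, q))"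
proof -
  have "(kron F (1\<^sub>m 2) * M) $$ (p, q) = (\<Sum>s = 0..<2 * n. kron F (1\<^sub>m 2) $$ (p, s) * M $$ (s, q))"
    using M F pq kron_one2_carrier[OF F] by (simp add: scalar_prod_def)
  also have "\<dots> = (\<Sum>c<n. F $$ (p div 2, c) * M $$ (2 * c + p mod 2, q))"
    unfolding sum_atLeast0_double
  proof (rule sum.cong[OF refl])
    fix c assume "c \<in> {..<n}"
    then have "2 * c < 2 * n" "2 * c + 1 < 2 * n" by auto
    then show "kron F (1\<^sub>m 2) $$ (p, 2 * c) * M $$ (2 * c, q) + kron F (1\<^sub>m 2) $$ (p, 2 * c + 1) * M $$ (2 * c + 1, q)
      = F $$ (p div 2, c) * M $$ (2 * c + p mod 2, q)"
      using kron_one2_index[OF F pq(1), of "2 * c"] kron_one2_index[OF F pq(1), of "2 * c + 1"]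
      by (cases "even p") auto
  qed
  finally show ?thesis .
qed

lemma kron_one2_mult:
  fixes F G :: "'a::semiring_1 mat"
  assumes F: "F \<in> carrier_mat n n" and G: "G \<in> carrier_mat n n"
  shows "kron F (1\<^sub>m 2) * kron G (1\<^sub>m 2) = kron (F * G) (1\<^sub>m 2)"
proof (rule eq_matI)
  have FG: "F * G \<in> carrier_mat n n" using F G by simp
  fix p q assume "p < dim_row (kron (F * G) (1\<^sub>m 2))" "q < dim_col (kron (F * G) (1\<^sub>m 2))"
  then have pq: "p < 2 * n" "q < 2 * n" using kron_one2_carrier[OF FG] by auto
  have "(kron F (1\<^sub>m 2) * kron G (1\<^sub>m 2)) $$ (p, q)
      = (\<Sum>c<n. F $$ (p div 2, c) * kron G (1\<^sub>m 2) $$ (2 * c + p mod 2, q))"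
    by (rule kron_one2_mult_index[OF kron_one2_carrier[OF G] F pq])
  also have "\<dots> = (\<Sum>c<n. F $$ (p div 2, c) * (if p mod 2 = q mod 2 then G $$ (c, q div 2) else 0))"
    by (rule sum.cong[OF refl]) (use pq in \<open>simp add: kron_one2_index[OF G]\<close>)
  also have "\<dots> = kron (F * G) (1\<^sub>m 2) $$ (p, q)"
    using F G pq by (auto simp: kron_one2_index[OF FG] scalar_prod_def lessThan_atLeast0)
  finally show "(kron F (1\<^sub>m 2) * kron G (1\<^sub>m 2)) $$ (p, q) = kron (F * G) (1\<^sub>m 2) $$ (p, q)" .
qed (use F G in \<open>auto simp: kron_def\<close>)

lemma kron_one2_one: "kron (1\<^sub>m n) (1\<^sub>m 2) = (1\<^sub>m (2 * n) :: 'a::semiring_1 mat)"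
proof (rule eq_matI)
  fix p q assume "p < dim_row (1\<^sub>m (2 * n) :: 'a mat)" "q < dim_col (1\<^sub>m (2 * n) :: 'a mat)"
  moreover have "p = q \<longleftrightarrow> p div 2 = q div 2 \<and> p mod 2 = q mod 2"
    by (metis div_mult_mod_eq)
  ultimately show "kron (1\<^sub>m n) (1\<^sub>m 2) $$ (p, q) = (1\<^sub>m (2 * n) :: 'a mat) $$ (p, q)"
    using kron_one2_index[of "1\<^sub>m n" n p q] by auto
qed (auto simp: kron_def)

section \<open>The Fourier matrix and its inverse\<close>

lemma add_pred_mult_mod_eq_0_iff:
  fixes r n c :: nat
  assumes "r < n" "c < n" shows "(r + (n - 1) * c) mod n = 0 \<longleftrightarrow> r = c"
proof -
  have "1 \<le> n" using assms by simp
  then have int_eq: "int (r + (n - 1) * c) = (int r - int c) + int c * int n"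
    by (simp only: of_nat_add of_nat_mult of_nat_diff of_nat_1) (simp add: algebra_simps)
  have "(r + (n - 1) * c) mod n = 0 \<longleftrightarrow> int n dvd int (r + (n - 1) * c)"
    unfolding of_nat_dvd_iff by (rule dvd_eq_mod_eq_0[symmetric])
  also have "\<dots> \<longleftrightarrow> int n dvd (int r - int c)"
    unfolding int_eq by (rule dvd_add_times_triv_right_iff)
  also have "\<dots> \<longleftrightarrow> r = c"
    using assms dvd_imp_le_int[of "int r - int c" "int n"] by (cases "r = c") auto
  finally show ?thesis .
qed

lemma sum_omega_powers_shift:
  assumes "r < n" "c < n"
  shows "(\<Sum>k<n. (omega n ^ (r + (n - 1) * c)) ^ k) = (if r = c then of_nat n else 0)"
proof -
  have "n > 0" using assms by simp
  then show ?thesis unfolding sum_omega_powers[OF \<open>n > 0\<close>] add_pred_mult_mod_eq_0_iff[OF assms] by simp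
qed

text \<open>Since \<open>cnj \<omega> = \<omega> ^ (n - 1)\<close> and \<open>F\<^sub>n\<^sup>*\<close> is symmetric, this is \<open>F\<^sub>n\<close> itself.\<close>

definition Fourier_mat :: "nat \<Rightarrow> complex mat" where
  "Fourier_mat n = mat n n (\<lambda>(r, c). omega n ^ ((n - 1) * r * c) / complex_of_real (sqrt (real n)))"

lemma Fstar_carrier: "Fstar n \<in> carrier_mat n n"
  unfolding Fstar_def by auto

lemma Fourier_mat_carrier: "Fourier_mat n \<in> carrier_mat n n"
  unfolding Fourier_mat_def by auto

lemma sum_omega_powers_normalized:
  assumes "r < n" "c < n"
  shows "(\<Sum>k<n. (omega n ^ (r + (n - 1) * c)) ^ k
      / complex_of_real (sqrt (real n)) / complex_of_real (sqrt (real n))) = (if r = c then 1 else 0)"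
proof -
  have "complex_of_real (sqrt (real n)) * complex_of_real (sqrt (real n)) = of_nat n"
    by (simp flip: of_real_mult)
  then have "(\<Sum>k<n. (omega n ^ (r + (n - 1) * c)) ^ k
      / complex_of_real (sqrt (real n)) / complex_of_real (sqrt (real n)))
      = (\<Sum>k<n. (omega n ^ (r + (n - 1) * c)) ^ k) / of_nat n"
    by (simp add: sum_divide_distrib divide_divide_eq_left)
  also have "\<dots> = (if r = c then 1 else 0)"
    unfolding sum_omega_powers_shift[OF assms] using assms by simp
  finally show ?thesis .
qed

lemma Fstar_mult_Fourier_mat: "Fstar n * Fourier_mat n = 1\<^sub>m n"
proof (rule eq_matI)
  fix r c assume "r < dim_row (1\<^sub>m n :: complex mat)" "c < dim_col (1\<^sub>m n :: complex mat)"
  then have rc: "r < n" "c < n" by auto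
  have "(Fstar n * Fourier_mat n) $$ (r, c) = (\<Sum>k<n. Fstar n $$ (r, k) * Fourier_mat n $$ (k, c))"
    using rc Fstar_carrier[of n] Fourier_mat_carrier[of n] by (simp add: scalar_prod_def lessThan_atLeast0)
  also have "\<dots> = (\<Sum>k<n. (omega n ^ (r + (n - 1) * c)) ^ k
      / complex_of_real (sqrt (real n)) / complex_of_real (sqrt (real n)))"
    using rc by (intro sum.cong) (simp_all add: Fstar_def Fourier_mat_def algebra_simps flip: power_mult power_add)
  also have "\<dots> = 1\<^sub>m n $$ (r, c)"
    using rc sum_omega_powers_normalized[OF rc] by simp
  finally show "(Fstar n * Fourier_mat n) $$ (r, c) = 1\<^sub>m n $$ (r, c)" .
qed (auto simp: Fstar_def Fourier_mat_def)

lemma Fourier_mat_mult_Fstar: "Fourier_mat n * Fstar n = 1\<^sub>m n"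
proof (rule eq_matI)
  fix r c assume "r < dim_row (1\<^sub>m n :: complex mat)" "c < dim_col (1\<^sub>m n :: complex mat)"
  then have rc: "r < n" "c < n" by auto
  have "(Fourier_mat n * Fstar n) $$ (r, c) = (\<Sum>k<n. Fourier_mat n $$ (r, k) * Fstar n $$ (k, c))"
    using rc Fstar_carrier[of n] Fourier_mat_carrier[of n] by (simp add: scalar_prod_def lessThan_atLeast0)
  also have "\<dots> = (\<Sum>k<n. (omega n ^ (c + (n - 1) * r)) ^ k
      / complex_of_real (sqrt (real n)) / complex_of_real (sqrt (real n)))"
    using rc by (intro sum.cong) (simp_all add: Fstar_def Fourier_mat_def algebra_simps flip: power_mult power_add)
  also have "\<dots> = 1\<^sub>m n $$ (r, c)"
    using rc sum_omega_powers_normalized[OF rc(2,1)] by auto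
  finally show "(Fourier_mat n * Fstar n) $$ (r, c) = 1\<^sub>m n $$ (r, c)" .
qed (auto simp: Fstar_def Fourier_mat_def)

section \<open>Block diagonalization of \<open>Ahat\<close>\<close>

lemma A1_carrier: "A1 a1 a2 \<in> carrier_mat 2 2"
  unfolding A1_def mat_of_rows_list_def by auto

lemma A2_carrier: "A2 a3 \<in> carrier_mat 2 2"
  unfolding A2_def mat_of_rows_list_def by auto

lemma Dblk_carrier: "Dblk n a1 a2 a3 i \<in> carrier_mat 2 2"
  unfolding Dblk_def using A1_carrier A2_carrier by auto

lemma Ahat_carrier: "Ahat n a1 a2 a3 \<in> carrier_mat (2 * n) (2 * n)"
  unfolding Ahat_def by auto

lemma block_diag2_carrier: "block_diag2 n D \<in> carrier_mat (2 * n) (2 * n)"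
  unfolding block_diag2_def by auto

lemma Dblk_index:
  "a < 2 \<Longrightarrow> b < 2 \<Longrightarrow>
    Dblk n a1 a2 a3 i $$ (a, b) = A1 a1 a2 $$ (a, b) + omega n ^ ((n - 1) * i) * A2 a3 $$ (a, b)"
  unfolding Dblk_def using A1_carrier[of a1 a2] A2_carrier[of a3] by simp

lemma Fstar_cyclic_shift:
  assumes "r < n" "k < n"
  shows "Fstar n $$ (if r = 0 then n - 1 else r - 1, k) = omega n ^ ((n - 1) * k) * Fstar n $$ (r, k)"
proof -
  have "omega n ^ ((if r = 0 then n - 1 else r - 1) * k) = omega n ^ ((n - 1) * k) * omega n ^ (r * k)"
  proof (cases "r = 0")
    case False
    then obtain r' n' where "r = Suc r'" "n = Suc n'" using assms by (metis gr0_conv_Suc gr_zeroI less_nat_zero_code)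
    then have "omega n ^ ((n - 1) * k) * omega n ^ (r * k) = (omega n ^ n) ^ k * omega n ^ ((r - 1) * k)"
      by (simp add: algebra_simps flip: power_add power_mult)
    then show ?thesis using False assms omega_power_self[of n] by simp
  qed simp
  then show ?thesis using assms unfolding Fstar_def by auto
qed

lemma kron_one2_mult_block_diag2_index:
  fixes F :: "'a::semiring_1 mat"
  assumes F: "F \<in> carrier_mat n n" and pq: "p < 2 * n" "q < 2 * n"
  shows "(kron F (1\<^sub>m 2) * block_diag2 n D) $$ (p, q) = F $$ (p div 2, q div 2) * D (q div 2) $$ (p mod 2, q mod 2)"
proof -
  have "(kron F (1\<^sub>m 2) * block_diag2 n D) $$ (p, q)
      = (\<Sum>c<n. if c = q div 2 then F $$ (p div 2, q div 2) * D (q div 2) $$ (p mod 2, q mod 2) else 0)"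
    unfolding kron_one2_mult_index[OF block_diag2_carrier F pq]
    by (rule sum.cong) (use pq in \<open>auto simp: block_diag2_def\<close>)
  moreover have "q div 2 < n" using pq by simp
  ultimately show ?thesis by simp
qed

lemma Ahat_mult_kron_one2_index:
  fixes F :: "complex mat"
  assumes n: "n \<ge> 2" and F: "F \<in> carrier_mat n n" and pq: "p < 2 * n" "q < 2 * n"
  defines "r \<equiv> p div 2" and "k \<equiv> q div 2" and "a \<equiv> p mod 2" and "b \<equiv> q mod 2"
  shows "(Ahat n a1 a2 a3 * kron F (1\<^sub>m 2)) $$ (p, q)
    = A1 a1 a2 $$ (a, b) * F $$ (r, k) + A2 a3 $$ (a, b) * F $$ (if r = 0 then n - 1 else r - 1, k)"
proof -
  define pr where "pr = (if r = 0 then n - 1 else r - 1)"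
  have r: "r < n" "pr < n" "r \<noteq> pr" using n pq unfolding r_def pr_def by auto
  have ab: "a < 2" "b < 2" unfolding a_def b_def by simp_all
  have "(Ahat n a1 a2 a3 * kron F (1\<^sub>m 2)) $$ (p, q) = (\<Sum>c<n. Ahat n a1 a2 a3 $$ (p, 2 * c + b) * F $$ (c, k))"
    unfolding b_def k_def by (rule mult_kron_one2_index[OF Ahat_carrier F pq])
  also have "\<dots> = (\<Sum>c<n. (if c = r then A1 a1 a2 $$ (a, b) * F $$ (c, k) else 0)
      + (if c = pr then A2 a3 $$ (a, b) * F $$ (c, k) else 0))"
  proof (rule sum.cong[OF refl])
    fix c assume "c \<in> {..<n}"
    then have "Ahat n a1 a2 a3 $$ (p, 2 * c + b) = Ahat_block n a1 a2 a3 r c $$ (a, b)"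
      using pq unfolding Ahat_def r_def a_def b_def by simp
    then show "Ahat n a1 a2 a3 $$ (p, 2 * c + b) * F $$ (c, k) = (if c = r then A1 a1 a2 $$ (a, b) * F $$ (c, k) else 0)
      + (if c = pr then A2 a3 $$ (a, b) * F $$ (c, k) else 0)"
      using r ab \<open>c \<in> {..<n}\<close> unfolding Ahat_block_def pr_def by auto
  qed
  also have "\<dots> = A1 a1 a2 $$ (a, b) * F $$ (r, k) + A2 a3 $$ (a, b) * F $$ (pr, k)"
    using r by (simp add: sum.distrib)
  finally show ?thesis unfolding pr_def .
qed

lemma Ahat_mult_kron_Fstar:
  assumes "n \<ge> 2"
  shows "Ahat n a1 a2 a3 * kron (Fstar n) (1\<^sub>m 2) = kron (Fstar n) (1\<^sub>m 2) * block_diag2 n (Dblk n a1 a2 a3)"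
proof (rule eq_matI)
  fix p q assume "p < dim_row (kron (Fstar n) (1\<^sub>m 2) * block_diag2 n (Dblk n a1 a2 a3))"
    "q < dim_col (kron (Fstar n) (1\<^sub>m 2) * block_diag2 n (Dblk n a1 a2 a3))"
  then have pq: "p < 2 * n" "q < 2 * n" by (auto simp: kron_def Fstar_def block_diag2_def)
  then show "(Ahat n a1 a2 a3 * kron (Fstar n) (1\<^sub>m 2)) $$ (p, q)
      = (kron (Fstar n) (1\<^sub>m 2) * block_diag2 n (Dblk n a1 a2 a3)) $$ (p, q)"
    unfolding Ahat_mult_kron_one2_index[OF assms Fstar_carrier pq]
      kron_one2_mult_block_diag2_index[OF Fstar_carrier pq]
    by (simp add: Fstar_cyclic_shift Dblk_index algebra_simps)
qed (auto simp: Ahat_def kron_def Fstar_def block_diag2_def)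

lemma kron_Fourier_mat_inverts:
  "kron (Fourier_mat n) (1\<^sub>m 2) * kron (Fstar n) (1\<^sub>m 2) = 1\<^sub>m (2 * n)"
  "kron (Fstar n) (1\<^sub>m 2) * kron (Fourier_mat n) (1\<^sub>m 2) = 1\<^sub>m (2 * n)"
  by (simp_all add: kron_one2_mult[OF Fourier_mat_carrier Fstar_carrier]
      kron_one2_mult[OF Fstar_carrier Fourier_mat_carrier]
      Fourier_mat_mult_Fstar Fstar_mult_Fourier_mat kron_one2_one)

lemma eigenvalue_similar_mat_iff:
  assumes "similar_mat A (B :: 'a::field mat)"
  shows "eigenvalue A z \<longleftrightarrow> eigenvalue B z"
proof -
  obtain n P Q where "{A, B, P, Q} \<subseteq> carrier_mat n n"
    using similar_matD[OF assms] by blast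
  then have A: "A \<in> carrier_mat n n" and B: "B \<in> carrier_mat n n" by auto
  show ?thesis
    unfolding eigenvalue_root_char_poly[OF A] eigenvalue_root_char_poly[OF B] char_poly_similar[OF assms] ..
qed

lemma Ahat_block_diagonalization:
  assumes "n \<ge> 2"
  shows "kron (Fourier_mat n) (1\<^sub>m 2) * Ahat n a1 a2 a3 * kron (Fstar n) (1\<^sub>m 2) = block_diag2 n (Dblk n a1 a2 a3)"
    and "similar_mat (Ahat n a1 a2 a3) (block_diag2 n (Dblk n a1 a2 a3))"
proof -
  let ?T = "kron (Fstar n) (1\<^sub>m 2)" and ?S = "kron (Fourier_mat n) (1\<^sub>m 2)"
    and ?A = "Ahat n a1 a2 a3" and ?B = "block_diag2 n (Dblk n a1 a2 a3)"
  have T: "?T \<in> carrier_mat (2 * n) (2 * n)" "?S \<in> carrier_mat (2 * n) (2 * n)"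
    using kron_one2_carrier Fourier_mat_carrier Fstar_carrier by blast+
  have "?S * ?A * ?T = ?S * (?T * ?B)"
    unfolding assoc_mult_mat[OF T(2) Ahat_carrier T(1)] Ahat_mult_kron_Fstar[OF assms] ..
  also have "\<dots> = ?B"
    unfolding assoc_mult_mat[OF T(2) T(1) block_diag2_carrier, symmetric] kron_Fourier_mat_inverts
    by (rule left_mult_one_mat[OF block_diag2_carrier])
  finally show "?S * ?A * ?T = ?B" .
  have "?A = ?A * (?T * ?S)"
    by (simp add: kron_Fourier_mat_inverts right_mult_one_mat[OF Ahat_carrier])
  also have "\<dots> = ?T * ?B * ?S"
    unfolding assoc_mult_mat[OF Ahat_carrier T(1) T(2), symmetric] Ahat_mult_kron_Fstar[OF assms] ..
  finally have "?A = ?T * ?B * ?S" .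
  moreover have "{?A, ?B, ?T, ?S} \<subseteq> carrier_mat (2 * n) (2 * n)"
    using T Ahat_carrier block_diag2_carrier by simp
  ultimately show "similar_mat ?A ?B"
    using kron_Fourier_mat_inverts by (intro similar_matI) auto
qed

section \<open>Eigenvalues\<close>

lemma block_diag2_mult_vec_index:
  assumes D: "\<And>i. D i \<in> carrier_mat 2 2" and v: "v \<in> carrier_vec (2 * n)" and p: "p < 2 * n"
  shows "(block_diag2 n D *\<^sub>v v) $ p = (D (p div 2) *\<^sub>v vec 2 (\<lambda>b. v $ (2 * (p div 2) + b))) $ (p mod 2)"
proof -
  have "(block_diag2 n D *\<^sub>v v) $ p = (\<Sum>s = 0..<2 * n. block_diag2 n D $$ (p, s) * v $ s)"
    using v p block_diag2_carrier[of n D] by (simp add: scalar_prod_def)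
  also have "\<dots> = (\<Sum>c<n. if c = p div 2 then D c $$ (p mod 2, 0) * v $ (2 * c) + D c $$ (p mod 2, 1) * v $ (2 * c + 1) else 0)"
    unfolding sum_atLeast0_double using p by (intro sum.cong) (auto simp: block_diag2_def)
  also have "\<dots> = D (p div 2) $$ (p mod 2, 0) * v $ (2 * (p div 2)) + D (p div 2) $$ (p mod 2, 1) * v $ (2 * (p div 2) + 1)"
    using p by (simp add: less_mult_imp_div_less)
  also have "\<dots> = (D (p div 2) *\<^sub>v vec 2 (\<lambda>b. v $ (2 * (p div 2) + b))) $ (p mod 2)"
    using D[of "p div 2"] by (simp add: scalar_prod_def numeral_2_eq_2)
  finally show ?thesis .
qed

lemma eigenvalue_block_diag2_iff:
  assumes D: "\<And>i. D i \<in> carrier_mat 2 2"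
  shows "eigenvalue (block_diag2 n D) z \<longleftrightarrow> (\<exists>i<n. eigenvalue (D i) z)"
proof
  assume "eigenvalue (block_diag2 n D) z"
  then obtain v where v: "v \<in> carrier_vec (2 * n)" "v \<noteq> 0\<^sub>v (2 * n)" "block_diag2 n D *\<^sub>v v = z \<cdot>\<^sub>v v"
    unfolding eigenvalue_def eigenvector_def using block_diag2_carrier[of n D] by auto
  then obtain p where p: "p < 2 * n" "v $ p \<noteq> 0"
    by (metis carrier_vecD eq_vecI index_zero_vec)
  define i where "i = p div 2"
  have "i < n" using p unfolding i_def by simp
  define u where "u = vec 2 (\<lambda>b. v $ (2 * i + b))"
  have "u $ (p mod 2) \<noteq> 0" using p unfolding u_def i_def by simp
  then have "u \<noteq> 0\<^sub>v 2" by auto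
  moreover have "D i *\<^sub>v u = z \<cdot>\<^sub>v u"
  proof (rule eq_vecI)
    fix a assume "a < dim_vec (z \<cdot>\<^sub>v u)"
    then have a: "a < 2" "2 * i + a < 2 * n" using \<open>i < n\<close> unfolding u_def by auto
    have "(block_diag2 n D *\<^sub>v v) $ (2 * i + a) = z * v $ (2 * i + a)" using v a by simp
    then show "(D i *\<^sub>v u) $ a = (z \<cdot>\<^sub>v u) $ a"
      using block_diag2_mult_vec_index[OF D v(1) a(2)] a unfolding u_def by simp
  qed (use D[of i] in \<open>simp add: u_def\<close>)
  moreover have "u \<in> carrier_vec 2" unfolding u_def by simp
  ultimately have "eigenvalue (D i) z"
    unfolding eigenvalue_def eigenvector_def using D[of i] by auto
  then show "\<exists>i<n. eigenvalue (D i) z" using \<open>i < n\<close> by auto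
next
  assume "\<exists>i<n. eigenvalue (D i) z"
  then obtain i u where i: "i < n" and u: "u \<in> carrier_vec 2" "u \<noteq> 0\<^sub>v 2" "D i *\<^sub>v u = z \<cdot>\<^sub>v u"
    unfolding eigenvalue_def eigenvector_def using D by (metis carrier_matD(1))
  define v where "v = vec (2 * n) (\<lambda>s. if s div 2 = i then u $ (s mod 2) else 0)"
  have v: "v \<in> carrier_vec (2 * n)" unfolding v_def by simp
  have blocks: "vec 2 (\<lambda>b. v $ (2 * j + b)) = (if j = i then u else 0\<^sub>v 2)" if "j < n" for j
    using that u(1) by (intro eq_vecI) (auto simp: v_def)
  obtain b where "b < 2" "u $ b \<noteq> 0"
    using u by (metis carrier_vecD eq_vecI index_zero_vec)
  then have "v $ (2 * i + b) \<noteq> 0" "2 * i + b < 2 * n" using i unfolding v_def by auto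
  then have "v \<noteq> 0\<^sub>v (2 * n)" by auto
  moreover have "block_diag2 n D *\<^sub>v v = z \<cdot>\<^sub>v v"
  proof (rule eq_vecI)
    fix p assume "p < dim_vec (z \<cdot>\<^sub>v v)"
    then have p: "p < 2 * n" "p div 2 < n" using v by auto
    have "(D i *\<^sub>v u) $ (p mod 2) = z * u $ (p mod 2)" using u by simp
    moreover have "(D j *\<^sub>v 0\<^sub>v 2) $ (p mod 2) = 0" for j
      using D[of j] by (simp add: row_def)
    ultimately show "(block_diag2 n D *\<^sub>v v) $ p = (z \<cdot>\<^sub>v v) $ p"
      unfolding block_diag2_mult_vec_index[OF D v p(1)] blocks[OF p(2)]
      using p by (simp add: v_def)
  qed (simp add: v_def block_diag2_def)
  ultimately show "eigenvalue (block_diag2 n D) z"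
    unfolding eigenvalue_def eigenvector_def using v block_diag2_carrier[of n D] by auto
qed

lemma det_mat2:
  assumes "(A :: 'a::comm_ring_1 mat) \<in> carrier_mat 2 2"
  shows "det A = A $$ (0, 0) * A $$ (1, 1) - A $$ (0, 1) * A $$ (1, 0)"
proof -
  have "det A = (\<Sum>i<2. A $$ (i, 0) * cofactor A i 0)"
    by (rule laplace_expansion_column[OF assms]) simp
  also have "\<dots> = A $$ (0, 0) * cofactor A 0 0 + A $$ (1, 0) * cofactor A 1 0"
    by (simp add: numeral_2_eq_2)
  finally show ?thesis
    using assms by (simp add: cofactor_def mat_delete_def numeral_2_eq_2 det_single)
qed

lemma eigenvalue_mat2_iff:
  assumes "(A :: 'a::field mat) \<in> carrier_mat 2 2"
  shows "eigenvalue A z \<longleftrightarrow>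
    z^2 - (A $$ (0, 0) + A $$ (1, 1)) * z + (A $$ (0, 0) * A $$ (1, 1) - A $$ (0, 1) * A $$ (1, 0)) = 0"
proof -
  have C: "char_matrix A z \<in> carrier_mat 2 2" using assms by simp
  show ?thesis
    unfolding eigenvalue_det[OF assms] det_mat2[OF C]
    using assms by (simp add: char_matrix_def algebra_simps power2_eq_square)
qed

lemma Dblk_eq_mat_of_rows_list:
  "Dblk n a1 a2 a3 i = mat_of_rows_list 2 [[0, -1 + omega n ^ ((n - 1) * i)],
     [of_real a1, - of_real a2 + of_real a3 * omega n ^ ((n - 1) * i)]]"
proof (rule eq_matI)
  fix a b assume "a < dim_row (mat_of_rows_list 2 [[0, -1 + omega n ^ ((n - 1) * i)],
     [of_real a1, - of_real a2 + of_real a3 * omega n ^ ((n - 1) * i)]] :: complex mat)"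
    "b < dim_col (mat_of_rows_list 2 [[0, -1 + omega n ^ ((n - 1) * i)],
     [of_real a1, - of_real a2 + of_real a3 * omega n ^ ((n - 1) * i)]] :: complex mat)"
  then have "a < 2" "b < 2" by (simp_all add: mat_of_rows_list_def)
  then show "Dblk n a1 a2 a3 i $$ (a, b) = mat_of_rows_list 2 [[0, -1 + omega n ^ ((n - 1) * i)],
     [of_real a1, - of_real a2 + of_real a3 * omega n ^ ((n - 1) * i)]] $$ (a, b)"
    by (auto simp: Dblk_index A1_def A2_def mat_of_rows_list_def less_2_cases_iff)
qed (use Dblk_carrier[of n a1 a2 a3 i] in \<open>auto simp: mat_of_rows_list_def\<close>)

lemma eigenvalue_Dblk_iff:
  "eigenvalue (Dblk n a1 a2 a3 i) z \<longleftrightarrow>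
    z^2 + (of_real a2 - of_real a3 * omega n ^ ((n - 1) * i)) * z + of_real a1 * (1 - omega n ^ ((n - 1) * i)) = 0"
  by (simp add: eigenvalue_mat2_iff[OF Dblk_carrier] Dblk_index A1_def A2_def mat_of_rows_list_def
      algebra_simps)

lemma quadratics_common_root:
  fixes a b c w w' z :: "'a::idom"
  assumes "w \<noteq> w'"
    and "z^2 + (b - c * w) * z + a * (1 - w) = 0" and "z^2 + (b - c * w') * z + a * (1 - w') = 0"
  shows "a * (a - b * c + c^2) = 0"
proof -
  have "(w' - w) * (c * z + a) = 0"
    using assms(2,3) by (simp add: algebra_simps power2_eq_square)
  then have cz: "c * z = - a" using assms(1) by (simp add: eq_neg_iff_add_eq_0)
  have "c^2 * (z^2 + (b - c * w) * z + a * (1 - w)) = (c * z)^2 + (b - c * w) * c * (c * z) + a * (1 - w) * c^2"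
    by (simp add: algebra_simps power2_eq_square)
  also have "\<dots> = a * (a - b * c + c^2)"
    unfolding cz by (simp add: algebra_simps power2_eq_square)
  finally show ?thesis using assms(2) by simp
qed

lemma omega_pred_power_inj:
  assumes "i < n" "k < n" "omega n ^ ((n - 1) * i) = omega n ^ ((n - 1) * k)"
  shows "i = k"
proof -
  have "n > 0" using assms by simp
  have "inverse (omega n ^ i) = inverse (omega n ^ k)"
    using assms(3) unfolding omega_power_pred_mult[OF \<open>n > 0\<close>] .
  then show ?thesis using assms(1,2) omega_power_inj by simp
qed

theorem mainTheorem3:
  fixes n :: nat and a1 a2 a3 :: real
  assumes "n \<ge> 2" and "a1 > 0" and "a2 > a3" and "a3 > 0"
  shows "(\<exists>Tinv. inverts_mat Tinv (kron (Fstar n) (1\<^sub>m 2))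
              \<and> inverts_mat (kron (Fstar n) (1\<^sub>m 2)) Tinv
              \<and> Tinv * Ahat n a1 a2 a3 * kron (Fstar n) (1\<^sub>m 2) = block_diag2 n (Dblk n a1 a2 a3))
    \<and> (\<forall>i<n. Dblk n a1 a2 a3 i =
           mat_of_rows_list 2 [[0, -1 + omega n ^ ((n-1)*i)],
                               [of_real a1, - of_real a2 + of_real a3 * omega n ^ ((n-1)*i)]])
    \<and> (\<forall>z::complex. eigenvalue (Ahat n a1 a2 a3) z \<longleftrightarrow>
           (\<exists>i<n. z^2 + (of_real a2 - of_real a3 * omega n ^ ((n-1)*i)) * z
                   + of_real a1 * (1 - omega n ^ ((n-1)*i)) = 0))
    \<and> (a1 - a2 * a3 + a3^2 \<noteq> 0 \<longrightarrow>
         (\<forall>i<n. \<forall>k<n. i \<noteq> k \<longrightarrow>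
            \<not> (\<exists>z. eigenvalue (Dblk n a1 a2 a3 i) z \<and> eigenvalue (Dblk n a1 a2 a3 k) z)))"
proof (intro conjI allI impI)
  show "\<exists>Tinv. inverts_mat Tinv (kron (Fstar n) (1\<^sub>m 2))
      \<and> inverts_mat (kron (Fstar n) (1\<^sub>m 2)) Tinv
      \<and> Tinv * Ahat n a1 a2 a3 * kron (Fstar n) (1\<^sub>m 2) = block_diag2 n (Dblk n a1 a2 a3)"
    using kron_Fourier_mat_inverts Ahat_block_diagonalization(1)[OF assms(1)]
    by (intro exI[of _ "kron (Fourier_mat n) (1\<^sub>m 2)"])
      (simp add: inverts_mat_def carrier_matD(1)[OF kron_one2_carrier[OF Fourier_mat_carrier]]
        carrier_matD(1)[OF kron_one2_carrier[OF Fstar_carrier]])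
  show "Dblk n a1 a2 a3 i = mat_of_rows_list 2 [[0, -1 + omega n ^ ((n-1)*i)],
      [of_real a1, - of_real a2 + of_real a3 * omega n ^ ((n-1)*i)]]" for i
    by (rule Dblk_eq_mat_of_rows_list)
  show "eigenvalue (Ahat n a1 a2 a3) z \<longleftrightarrow> (\<exists>i<n. z^2 + (of_real a2 - of_real a3 * omega n ^ ((n-1)*i)) * z
      + of_real a1 * (1 - omega n ^ ((n-1)*i)) = 0)" for z
    unfolding eigenvalue_similar_mat_iff[OF Ahat_block_diagonalization(2)[OF assms(1)]]
      eigenvalue_block_diag2_iff[OF Dblk_carrier] eigenvalue_Dblk_iff ..
  fix i k assume "a1 - a2 * a3 + a3^2 \<noteq> 0" "i < n" "k < n" "i \<noteq> k"
  then have "complex_of_real a1 * (of_real a1 - of_real a2 * of_real a3 + (of_real a3)^2) \<noteq> 0"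
    "omega n ^ ((n - 1) * i) \<noteq> omega n ^ ((n - 1) * k)"
    using assms(2) omega_pred_power_inj by (simp_all flip: of_real_mult of_real_diff of_real_add of_real_power) blast
  then show "\<not> (\<exists>z. eigenvalue (Dblk n a1 a2 a3 i) z \<and> eigenvalue (Dblk n a1 a2 a3 k) z)"
    unfolding eigenvalue_Dblk_iff using quadratics_common_root by blast
qed

end
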